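(* Let $c\in\mathbb{N}$, $\beta$ a parameter, and $\varphi:(x_0,x_1,x_2,x_3)\mapsto\big(x_1,x_2,x_3,(x_1x_3+\beta x_2^c)/x_0\big)$. Then the two-form $$\omega=\left(\frac{dx_0\wedge dx_1}{x_0x_1}+\frac{dx_0\wedge dx_3}{x_0x_3}+\frac{dx_2\wedge dx_3}{x_2x_3}\right)-c\left(\frac{dx_0\wedge dx_2}{x_0x_2}+\frac{dx_1\wedge dx_3}{x_1x_3}\right)+(c+1)\frac{dx_1\wedge dx_2}{x_1x_2}$$ is preserved by $\varphi$ (i.e. $\varphi^*\omega=\omega$), and $\omega$ is symplectic for $c\neq 2$. When $c=2$, $\omega$ is degenerate, being the pullback of the two-form $(u_1u_2)^{-1}\,du_1\wedge du_2$ under the map $(x_0,x_1,x_2,x_3)\mapsto(u_1,u_2)=\big(x_0x_2/x_1^2,\;x_1x_3/x_2^2\big)$.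
   Context: $\mathbb{N}$ includes $0$. *)

theory Defs
  imports "HOL-Analysis.Analysis"
begin

text \<open>Differential two-forms on an open set of a Euclidean space are represented pointwise:
  a two-form is a function assigning to each point x a bilinear (alternating) form
  omega x v w on tangent vectors v, w.\<close>

type_synonym 'a twoform = "'a \<Rightarrow> 'a \<Rightarrow> 'a \<Rightarrow> real"

definition dwedge :: "'i \<Rightarrow> 'i \<Rightarrow> real^'i \<Rightarrow> real^'i \<Rightarrow> real" where
  "dwedge i j v w = v$i * w$j - v$j * w$i"

definition pullback2 :: "('a::real_normed_vector \<Rightarrow> 'b::real_normed_vector) \<Rightarrow> 'b twoform \<Rightarrow> 'a twoform" where
  "pullback2 F \<omega> x v w =
     \<omega> (F x) (frechet_derivative F (at x) v) (frechet_derivative F (at x) w)"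

definition ext_d2 :: "('a::real_normed_vector) twoform \<Rightarrow> 'a \<Rightarrow> 'a \<Rightarrow> 'a \<Rightarrow> 'a \<Rightarrow> real" where
  "ext_d2 \<omega> x u v w =
      frechet_derivative (\<lambda>y. \<omega> y v w) (at x) u
    - frechet_derivative (\<lambda>y. \<omega> y u w) (at x) v
    + frechet_derivative (\<lambda>y. \<omega> y u v) (at x) w"

definition nondegenerate_at :: "('a::real_vector) twoform \<Rightarrow> 'a \<Rightarrow> bool" where
  "nondegenerate_at \<omega> x \<longleftrightarrow> (\<forall>v. (\<forall>w. \<omega> x v w = 0) \<longrightarrow> v = 0)"

definition symplectic_on :: "'a set \<Rightarrow> ('a::real_normed_vector) twoform \<Rightarrow> bool" where
  "symplectic_on U \<omega> \<longleftrightarrow>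
     (\<forall>x\<in>U. (\<forall>v w. (\<lambda>y. \<omega> y v w) differentiable (at x))
            \<and> (\<forall>u v w. ext_d2 \<omega> x u v w = 0)
            \<and> nondegenerate_at \<omega> x)"

definition torus :: "(real^'i) set" where
  "torus = {x. \<forall>i. x$i \<noteq> 0}"

text \<open>The map phi (coordinates x0..x3 are indices 0..3 of real^4; indexed 0..3 by the numeral type 4).\<close>
definition phi :: "nat \<Rightarrow> real \<Rightarrow> real^4 \<Rightarrow> real^4" where
  "phi c \<beta> x = (\<chi> i. if i = 0 then x$1 else if i = 1 then x$2 else if i = 2 then x$3
                          else (x$1 * x$3 + \<beta> * (x$2)^c) / x$0)"

definition omega :: "nat \<Rightarrow> (real^4) twoform" where
  "omega c x v w =
     (dwedge 0 1 v w / (x$0 * x$1) + dwedge 0 3 v w / (x$0 * x$3) + dwedge 2 3 v w / (x$2 * x$3))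
     - real c * (dwedge 0 2 v w / (x$0 * x$2) + dwedge 1 3 v w / (x$1 * x$3))
     + (real c + 1) * (dwedge 1 2 v w / (x$1 * x$2))"

definition psi :: "real^4 \<Rightarrow> real^2" where
  "psi x = (\<chi> i. if i = 0 then x$0 * x$2 / (x$1)^2 else x$1 * x$3 / (x$2)^2)"

definition eta :: "(real^2) twoform" where
  "eta u a b = dwedge 0 1 a b / (u$0 * u$1)"

end

theory Submission imports Defs begin

(* In the logarithmic coframe a_i = dx_i / x_i the form omega has constant coefficients,
   omega(v, w) = B_c(a(v), a(w)) for a fixed antisymmetric bilinear form B_c on R^4.
   Hence omega is closed, and it is nondegenerate exactly when the Pfaffian -(c - 2)(c + 1) of B_c is nonzero.
   The differential of phi acts on the coframe by
     a |-> (a_1, a_2, a_3, -a_0 + t (a_1 + a_3) + (1 - t) c a_2),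
   where t = x_1 x_3 / (x_1 x_3 + beta x_2^c), and B_c is invariant under this substitution
   for every value of t. For c = 2 one has du_1/u_1 = a_0 - 2 a_1 + a_2 and
   du_2/u_2 = a_1 - 2 a_2 + a_3, and the wedge of these two forms is B_2. *)

lemma has_derivative_vec_nth [derivative_intros]: "((\<lambda>y. y$i) has_derivative (\<lambda>u. u$i)) F"
  by (rule bounded_linear_imp_has_derivative) (rule bounded_linear_vec_nth)

lemma has_derivative_vec_componentwise:
  fixes f :: "'a::real_normed_vector \<Rightarrow> real^'n"
  assumes "\<And>i. ((\<lambda>x. f x $ i) has_derivative (\<lambda>v. f' v $ i)) (at a)"
  shows "(f has_derivative f') (at a)"
  using has_derivative_componentwise_within[of f f' a UNIV] assms
  by (auto simp: Basis_vec_def cart_eq_inner_axis)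

lemma pullback2_eq:
  assumes "(F has_derivative F') (at x)"
  shows "pullback2 F \<omega> x v w = \<omega> (F x) (F' v) (F' w)"
  using frechet_derivative_at[OF assms] by (simp add: pullback2_def)

lemma torus_nth_nonzero: "x \<in> torus \<Longrightarrow> x$i \<noteq> 0"
  by (simp add: torus_def)

definition dlog :: "real^'i \<Rightarrow> real^'i \<Rightarrow> real^'i" where
  "dlog x v = (\<chi> i. v$i / x$i)"

lemma dlog_nth [simp]: "dlog x v $ i = v$i / x$i"
  by (simp add: dlog_def)

text \<open>This holds even off the torus, since a zero coordinate makes both sides 0.\<close>
lemma dwedge_div_eq_dwedge_dlog: "dwedge i j v w / (x$i * x$j) = dwedge i j (dlog x v) (dlog x w)"
  by (cases "x$i = 0"; cases "x$j = 0") (simp_all add: dwedge_def field_simps)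

lemma has_derivative_dlog:
  assumes "\<And>i. x$i \<noteq> 0"
  shows "((\<lambda>y. dlog y v) has_derivative (\<lambda>u. - (dlog x u * dlog x v))) (at x)"
  by (rule has_derivative_vec_componentwise)
     (use assms in \<open>auto intro!: derivative_eq_intros simp: field_simps power2_eq_square\<close>)

lemma has_derivative_log_form:
  fixes B :: "real^'i \<Rightarrow> real^'i \<Rightarrow> real"
  assumes "bilinear B" "\<And>i. x$i \<noteq> 0"
  shows "((\<lambda>y. B (dlog y v) (dlog y w)) has_derivative
           (\<lambda>u. - B (dlog x u * dlog x v) (dlog x w) - B (dlog x v) (dlog x u * dlog x w))) (at x)"
proof -
  interpret bounded_bilinear B
    using assms(1) bilinear_conv_bounded_bilinear by blast
  show ?thesis
    by (rule has_derivative_eq_rhs[OF FDERIV[OF has_derivative_dlog[OF assms(2)]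
                                                 has_derivative_dlog[OF assms(2)]]])
       (simp add: fun_eq_iff minus_left minus_right mult.commute)
qed

text \<open>Each term of the cyclic sum cancels against another one, by antisymmetry of \<open>B\<close> and
  commutativity of the coordinatewise product.\<close>
lemma ext_d2_log_form:
  fixes B :: "real^'i \<Rightarrow> real^'i \<Rightarrow> real"
  assumes "bilinear B" "\<And>a b. B a b = - B b a" "\<And>i. x$i \<noteq> 0"
  shows "ext_d2 (\<lambda>y v w. B (dlog y v) (dlog y w)) x u v w = 0"
proof -
  note fd = frechet_derivative_at[OF has_derivative_log_form[OF assms(1,3)], symmetric]
  show ?thesis
    unfolding ext_d2_def fd
    using assms(2)[of "dlog x u" "dlog x v * dlog x w"] assms(2)[of "dlog x v" "dlog x u * dlog x w"]
    by (simp add: mult.commute)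
qed

definition log_omega :: "real \<Rightarrow> real^4 \<Rightarrow> real^4 \<Rightarrow> real" where
  "log_omega C a b =
     (dwedge 0 1 a b + dwedge 0 3 a b + dwedge 2 3 a b)
     - C * (dwedge 0 2 a b + dwedge 1 3 a b) + (C + 1) * dwedge 1 2 a b"

lemma omega_eq_log_omega: "omega c x v w = log_omega (real c) (dlog x v) (dlog x w)"
  by (simp add: omega_def log_omega_def dwedge_div_eq_dwedge_dlog)

lemma bilinear_log_omega: "bilinear (log_omega C)"
  by (auto simp: bilinear_def log_omega_def dwedge_def algebra_simps intro!: linearI)

lemma log_omega_antisym: "log_omega C a b = - log_omega C b a"
  by (simp add: log_omega_def dwedge_def algebra_simps)

lemma omega_has_derivative:
  assumes "x \<in> torus"
  shows "((\<lambda>y. omega c y v w) has_derivative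
           (\<lambda>u. - log_omega (real c) (dlog x u * dlog x v) (dlog x w)
                - log_omega (real c) (dlog x v) (dlog x u * dlog x w))) (at x)"
  unfolding omega_eq_log_omega
  by (rule has_derivative_log_form[OF bilinear_log_omega torus_nth_nonzero[OF assms]])

lemma ext_d2_omega:
  assumes "x \<in> torus"
  shows "ext_d2 (omega c) x u v w = 0"
proof -
  have "omega c = (\<lambda>y v w. log_omega (real c) (dlog y v) (dlog y w))"
    by (simp add: fun_eq_iff omega_eq_log_omega)
  then show ?thesis
    using ext_d2_log_form[OF bilinear_log_omega log_omega_antisym torus_nth_nonzero[OF assms]]
    by simp
qed

lemma vec4_eq_iff: "(a::'a^4) = b \<longleftrightarrow> a$0 = b$0 \<and> a$1 = b$1 \<and> a$2 = b$2 \<and> a$3 = b$3"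
proof -
  have four_eq_zero: "(4::4) = 0" by simp
  show ?thesis unfolding vec_eq_iff forall_4 four_eq_zero by auto
qed

lemma vec2_eq_iff: "(a::'a^2) = b \<longleftrightarrow> a$0 = b$0 \<and> a$1 = b$1"
proof -
  have two_eq_zero: "(2::2) = 0" by simp
  show ?thesis unfolding vec_eq_iff forall_2 two_eq_zero by auto
qed

text \<open>\<open>(C - 2) * (C + 1)\<close> is, up to sign, the Pfaffian of \<open>log_omega C\<close>.\<close>
lemma log_omega_nondegenerate:
  assumes "(C - 2) * (C + 1) \<noteq> 0" "\<And>b. log_omega C a b = 0"
  shows "a = 0"
proof -
  have "- a$1 - a$3 + C * a$2 = 0" "a$0 + C * a$3 - (C + 1) * a$2 = 0"
       "- a$3 - C * a$0 + (C + 1) * a$1 = 0" "a$0 + a$2 - C * a$1 = 0"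
    using assms(2)[of "axis 0 1"] assms(2)[of "axis 1 1"] assms(2)[of "axis 2 1"]
      assms(2)[of "axis 3 1"]
    by (simp_all add: log_omega_def dwedge_def axis_def)
  then have "(C - 2) * (C + 1) * a$0 = 0" "(C - 2) * (C + 1) * a$1 = 0"
       "(C - 2) * (C + 1) * a$2 = 0" "(C - 2) * (C + 1) * a$3 = 0"
    by algebra+
  with assms(1) show "a = 0"
    by (simp add: vec4_eq_iff)
qed

lemma nondegenerate_at_omega:
  assumes "x \<in> torus" "c \<noteq> 2"
  shows "nondegenerate_at (omega c) x"
  unfolding nondegenerate_at_def
proof (intro allI impI)
  fix v assume v: "\<forall>w. omega c x v w = 0"
  have x: "\<And>i. x$i \<noteq> 0" using torus_nth_nonzero[OF assms(1)] .
  have "log_omega (real c) (dlog x v) b = 0" for b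
  proof -
    have "dlog x (\<chi> i. x$i * b$i) = b" using x by (simp add: vec_eq_iff)
    then show ?thesis using v[rule_format, of "\<chi> i. x$i * b$i"] by (simp add: omega_eq_log_omega)
  qed
  moreover have "(real c - 2) * (real c + 1) \<noteq> 0" using assms(2) by simp
  ultimately have "dlog x v = 0" using log_omega_nondegenerate by blast
  then show "v = 0" using x by (simp add: vec_eq_iff)
qed

text \<open>For \<open>c = 2\<close> the Euler vector field \<open>x\<close> lies in the kernel: \<open>psi\<close> is homogeneous of degree 0.\<close>
lemma omega_2_degenerate:
  assumes "x \<in> torus"
  shows "\<not> nondegenerate_at (omega 2) x"
proof -
  have "dlog x x = 1" using torus_nth_nonzero[OF assms] by (simp add: vec_eq_iff)
  then have "omega 2 x x w = 0" for w
    by (simp add: omega_eq_log_omega log_omega_def dwedge_def algebra_simps)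
  moreover have "x \<noteq> 0" using torus_nth_nonzero[OF assms, of 0] by auto
  ultimately show ?thesis unfolding nondegenerate_at_def by blast
qed

definition phi_deriv :: "nat \<Rightarrow> real \<Rightarrow> real^4 \<Rightarrow> real^4 \<Rightarrow> real^4" where
  "phi_deriv c \<beta> x v = (\<chi> i. if i = 0 then v$1 else if i = 1 then v$2 else if i = 2 then v$3
     else (v$1 * x$3 + x$1 * v$3 + \<beta> * (real c * x$2^(c - 1) * v$2)) / x$0
          - (x$1 * x$3 + \<beta> * (x$2)^c) * v$0 / (x$0)^2)"

lemma has_derivative_phi:
  assumes "x$0 \<noteq> 0"
  shows "(phi c \<beta> has_derivative phi_deriv c \<beta> x) (at x)"
proof (rule has_derivative_vec_componentwise)
  fix i :: 4
  have "((\<lambda>y. (y$1 * y$3 + \<beta> * (y$2)^c) / y$0) has_derivative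
          (\<lambda>v. phi_deriv c \<beta> x v $ 3)) (at x)"
    using assms
    by (auto intro!: derivative_eq_intros ext simp: phi_deriv_def field_simps power2_eq_square)
  then show "((\<lambda>y. phi c \<beta> y $ i) has_derivative (\<lambda>v. phi_deriv c \<beta> x v $ i)) (at x)"
    unfolding phi_def by (cases "i = 0"; cases "i = 1"; cases "i = 2")
      (simp_all add: phi_deriv_def has_derivative_vec_nth)
qed

definition phi_dlog_map :: "real \<Rightarrow> real \<Rightarrow> real^4 \<Rightarrow> real^4" where
  "phi_dlog_map C t a = (\<chi> i. if i = 0 then a$1 else if i = 1 then a$2 else if i = 2 then a$3
     else - a$0 + t * (a$1 + a$3) + (1 - t) * C * a$2)"

lemma log_omega_phi_dlog_map:
  "log_omega C (phi_dlog_map C t a) (phi_dlog_map C t b) = log_omega C a b"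
  by (simp add: log_omega_def phi_dlog_map_def dwedge_def algebra_simps)

lemma dlog_phi_deriv:
  assumes "x \<in> torus" "phi c \<beta> x \<in> torus"
  defines "t \<equiv> x$1 * x$3 / (x$1 * x$3 + \<beta> * x$2^c)"
  shows "dlog (phi c \<beta> x) (phi_deriv c \<beta> x v) = phi_dlog_map (real c) t (dlog x v)"
proof -
  have x: "\<And>i. x$i \<noteq> 0" using torus_nth_nonzero[OF assms(1)] .
  define N where "N = x$1 * x$3 + \<beta> * x$2^c"
  have N: "N \<noteq> 0" using torus_nth_nonzero[OF assms(2), of 3] by (simp add: phi_def N_def)
  have split_N: "x$1 * x$3 = t * N" "\<beta> * x$2^c = (1 - t) * N"
    using N by (simp_all add: t_def N_def field_simps)
  have "phi_deriv c \<beta> x v $ 3 = (x$1 * x$3 * (v$1 / x$1 + v$3 / x$3)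
          + real c * (\<beta> * x$2^c) * (v$2 / x$2) - N * (v$0 / x$0)) / x$0"
    using x by (cases c) (simp_all add: phi_deriv_def N_def field_simps power2_eq_square)
  also have "\<dots> = N / x$0 * phi_dlog_map (real c) t (dlog x v) $ 3"
    unfolding split_N by (simp add: phi_dlog_map_def field_simps)
  finally have "phi_deriv c \<beta> x v $ 3 / phi c \<beta> x $ 3 = phi_dlog_map (real c) t (dlog x v) $ 3"
    using x[of 0] N by (simp add: phi_def N_def)
  then show ?thesis
    by (simp add: vec4_eq_iff phi_def phi_deriv_def phi_dlog_map_def)
qed

lemma pullback2_phi_omega:
  assumes "x \<in> torus" "phi c \<beta> x \<in> torus"
  shows "pullback2 (phi c \<beta>) (omega c) x = omega c x"
proof (intro ext)
  fix v w
  have "pullback2 (phi c \<beta>) (omega c) x v w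
          = omega c (phi c \<beta> x) (phi_deriv c \<beta> x v) (phi_deriv c \<beta> x w)"
    using has_derivative_phi[OF torus_nth_nonzero[OF assms(1)]] by (rule pullback2_eq)
  also have "\<dots> = omega c x v w"
    unfolding omega_eq_log_omega dlog_phi_deriv[OF assms] log_omega_phi_dlog_map ..
  finally show "pullback2 (phi c \<beta>) (omega c) x v w = omega c x v w" .
qed

definition psi_deriv :: "real^4 \<Rightarrow> real^4 \<Rightarrow> real^2" where
  "psi_deriv x v = (\<chi> i.
     if i = 0 then (v$0 * x$2 + x$0 * v$2) / (x$1)^2 - 2 * x$0 * x$2 * v$1 / (x$1)^3
     else (v$1 * x$3 + x$1 * v$3) / (x$2)^2 - 2 * x$1 * x$3 * v$2 / (x$2)^3)"

lemma has_derivative_psi: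
  assumes "x$1 \<noteq> 0" "x$2 \<noteq> 0"
  shows "(psi has_derivative psi_deriv x) (at x)"
proof (rule has_derivative_vec_componentwise)
  fix i :: 2
  have "((\<lambda>y. y$0 * y$2 / (y$1)^2) has_derivative (\<lambda>v. psi_deriv x v $ 0)) (at x)"
       "((\<lambda>y. y$1 * y$3 / (y$2)^2) has_derivative (\<lambda>v. psi_deriv x v $ 1)) (at x)"
    using assms by (auto intro!: derivative_eq_intros ext
                          simp: psi_deriv_def field_simps power2_eq_square power3_eq_cube)
  then show "((\<lambda>y. psi y $ i) has_derivative (\<lambda>v. psi_deriv x v $ i)) (at x)"
    unfolding psi_def by (cases "i = 0") (simp_all add: psi_deriv_def)
qed

definition psi_dlog_map :: "real^4 \<Rightarrow> real^2" where
  "psi_dlog_map a = (\<chi> i. if i = 0 then a$0 - 2 * a$1 + a$2 else a$1 - 2 * a$2 + a$3)"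

lemma dlog_psi_deriv:
  assumes "x \<in> torus"
  shows "dlog (psi x) (psi_deriv x v) = psi_dlog_map (dlog x v)"
  using torus_nth_nonzero[OF assms]
  by (simp add: vec2_eq_iff psi_deriv_def psi_def psi_dlog_map_def
                field_simps power2_eq_square power3_eq_cube)

lemma dwedge_psi_dlog_map: "dwedge 0 1 (psi_dlog_map a) (psi_dlog_map b) = log_omega 2 a b"
  by (simp add: psi_dlog_map_def log_omega_def dwedge_def algebra_simps)

lemma omega_2_eq_pullback2_psi:
  assumes "x \<in> torus"
  shows "omega 2 x = pullback2 psi eta x"
proof (intro ext)
  fix v w
  have "pullback2 psi eta x v w = eta (psi x) (psi_deriv x v) (psi_deriv x w)"
    using has_derivative_psi[OF torus_nth_nonzero[OF assms] torus_nth_nonzero[OF assms]]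
    by (rule pullback2_eq)
  also have "\<dots> = omega 2 x v w"
    unfolding eta_def dwedge_div_eq_dwedge_dlog dlog_psi_deriv[OF assms] dwedge_psi_dlog_map
    by (simp add: omega_eq_log_omega)
  finally show "omega 2 x v w = pullback2 psi eta x v w" by simp
qed

theorem corollary3p3:
  fixes c :: nat and \<beta> :: real
  shows "(\<forall>x\<in>torus. phi c \<beta> x \<in> torus \<longrightarrow> pullback2 (phi c \<beta>) (omega c) x = omega c x)
       \<and> (c \<noteq> 2 \<longrightarrow> symplectic_on torus (omega c))
       \<and> (c = 2 \<longrightarrow> (\<forall>x\<in>torus. \<not> nondegenerate_at (omega c) x)
                 \<and> (\<forall>x\<in>torus. omega c x = pullback2 psi eta x))"
proof (intro conjI impI ballI)
  show "pullback2 (phi c \<beta>) (omega c) x = omega c x" if "x \<in> torus" "phi c \<beta> x \<in> torus" for x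
    using that by (rule pullback2_phi_omega)
  show "symplectic_on torus (omega c)" if "c \<noteq> 2"
    unfolding symplectic_on_def differentiable_def
    using omega_has_derivative ext_d2_omega nondegenerate_at_omega[OF _ that] by blast
qed (use omega_2_degenerate omega_2_eq_pullback2_psi in auto)

end
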